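(* Let $X$ be a space satisfying ${\sf S}_1(\mathcal{G}_K,\mathcal{G})$. Then for each sequence $(\mathcal{U}_n:n\in\mathbb{N})$ of elements of $\mathcal{G}_K$ there is a sequence $(U_n:n\in\mathbb{N})$ with $U_n\in\mathcal{U}_n$ for each $n$, such that for each $x\in X$, for all but finitely many $n$, \[ x\in \bigcup_{T_n<j\le T_{n+1}} U_j, \] where $T_n=1+2+\cdots+n$ is the $n$-th triangular number.
   Context: All spaces are infinite ${\sf T}_1$ topological spaces. $\mathcal{G}_K$ is the family of all collections $\mathcal{U}$ of ${\sf G}_\delta$ subsets of $X$ with $X\notin\mathcal{U}$ such that each compact subset of $X$ is contained in some member of $\mathcal{U}$. $\mathcal{G}$ is the family of all covers of $X$ by ${\sf G}_\delta$ sets. ${\sf S}_1(\mathcal{A},\mathcal{B})$: for each sequence $(A_n)$ of elements of $\mathcal{A}$ there are $B_n\in A_n$ with $\{B_n:n\in\mathbb{N}\}\in\mathcal{B}$. *)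

theory Defs
  imports "HOL-Analysis.Analysis"
begin

definition GK :: "'a topology \<Rightarrow> 'a set set set" where
  "GK X = {\<U>. (\<forall>U\<in>\<U>. gdelta_in X U) \<and> topspace X \<notin> \<U> \<and>
              (\<forall>K. compactin X K \<longrightarrow> (\<exists>U\<in>\<U>. K \<subseteq> U))}"

definition Gcov :: "'a topology \<Rightarrow> 'a set set set" where
  "Gcov X = {\<U>. (\<forall>U\<in>\<U>. gdelta_in X U) \<and> \<Union>\<U> = topspace X}"

definition S1 :: "'b set set \<Rightarrow> 'b set set \<Rightarrow> bool" where
  "S1 A B \<longleftrightarrow> (\<forall>\<A>::nat \<Rightarrow> 'b set. (\<forall>n. \<A> n \<in> A) \<longrightarrow>
                 (\<exists>f. (\<forall>n. f n \<in> \<A> n) \<and> range f \<in> B))"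

definition tri :: "nat \<Rightarrow> nat" where
  "tri n = n * (n + 1) div 2"

end

theory Submission
  imports Defs
begin

text \<open>Write every index as \<open>j = T n + m\<close> with \<open>m \<le> n\<close>. For fixed \<open>m\<close>, the intersections
  \<open>\<Inter>n\<ge>m. V n\<close> with \<open>V n \<in> \<U> (T n + m)\<close> again form a member of \<open>G_K\<close>: countable intersections
  of \<open>G\<^sub>\<delta>\<close> sets are \<open>G\<^sub>\<delta>\<close>, and a compact set lying in a member of each \<open>\<U> j\<close> lies in such
  an intersection. Applying \<open>S\<^sub>1(G_K, G)\<close> to these families yields a cover; if \<open>x\<close> lies in
  the intersection selected for \<open>m\<close>, then \<open>x \<in> U (T n + m)\<close> for every \<open>n \<ge> m\<close>, and
  \<open>T n + m\<close> lies in the \<open>n\<close>-th block.\<close>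

lemma tri_Suc: "tri (Suc n) = tri n + Suc n"
  unfolding tri_def by (induction n) auto

lemma tri_mono: "n \<le> n' \<Longrightarrow> tri n \<le> tri n'"
proof (induction n' rule: dec_induct)
  case (step k) then show ?case by (simp add: tri_Suc)
qed simp

lemma tri_block_exists: "\<exists>n. tri n \<le> j \<and> j < tri (Suc n)"
proof (induction j)
  case 0 then show ?case by (intro exI[of _ 0]) (simp add: tri_def)
next
  case (Suc j)
  then obtain n where n: "tri n \<le> j" "j < tri (Suc n)" by blast
  show ?case
  proof (cases "Suc j < tri (Suc n)")
    case True with n show ?thesis by (intro exI[of _ n]) simp
  next
    case False
    with n have "Suc j = tri (Suc n)" by simp
    then show ?thesis by (intro exI[of _ "Suc n"]) (simp add: tri_Suc[of "Suc n"])
  qed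
qed

lemma tri_block_unique:
  assumes "tri n \<le> j" "j < tri (Suc n)" "tri n' \<le> j" "j < tri (Suc n')"
  shows "n = n'"
proof (rule ccontr)
  assume "n \<noteq> n'"
  then consider "Suc n \<le> n'" | "Suc n' \<le> n" by linarith
  then show False
    by cases (use assms tri_mono in fastforce)+
qed

lemma tri_plus_inj:
  assumes "m \<le> n" "m' \<le> n'" "tri n + m = tri n' + m'"
  shows "n = n' \<and> m = m'"
proof -
  have "n = n'"
    by (rule tri_block_unique[of n "tri n + m"]) (use assms in \<open>simp_all add: tri_Suc\<close>)
  with assms show ?thesis by simp
qed

lemma bij_betw_tri_plus: "bij_betw (\<lambda>(n, m). tri n + m) {(n, m :: nat). m \<le> n} UNIV"
  unfolding bij_betw_def
proof
  show "inj_on (\<lambda>(n, m). tri n + m) {(n, m). m \<le> n}"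
    by (rule inj_onI) (use tri_plus_inj in auto)
  show "(\<lambda>(n, m). tri n + m) ` {(n, m). m \<le> n} = UNIV"
  proof (intro set_eqI iffI)
    fix j :: nat
    obtain n where "tri n \<le> j" "j < tri (Suc n)" using tri_block_exists by blast
    then show "j \<in> (\<lambda>(n, m). tri n + m) ` {(n, m). m \<le> n}"
      by (intro image_eqI[of _ _ "(n, j - tri n)"]) (auto simp: tri_Suc)
  qed simp
qed

lemma triangular_selection:
  assumes "\<And>m n. m \<le> n \<Longrightarrow> V m n \<in> \<U> (tri n + m)"
  obtains U where "\<And>j. U j \<in> \<U> j" and "\<And>m n. m \<le> n \<Longrightarrow> U (tri n + m) = V m n"
proof
  let ?g = "\<lambda>(n, m). tri n + m" and ?D = "{(n, m :: nat). m \<le> n}"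
  define U where "U j = (case inv_into ?D ?g j of (n, m) \<Rightarrow> V m n)" for j
  show "U j \<in> \<U> j" for j
  proof -
    have "j \<in> ?g ` ?D" using bij_betw_tri_plus by (simp add: bij_betw_def)
    then have "inv_into ?D ?g j \<in> ?D" "?g (inv_into ?D ?g j) = j"
      by (rule inv_into_into, rule f_inv_into_f)
    then show ?thesis using assms by (auto simp: U_def split: prod.splits)
  qed
  show "U (tri n + m) = V m n" if "m \<le> n" for m n
    using bij_betw_inv_into_left[OF bij_betw_tri_plus, of "(n, m)"] that
    by (simp add: U_def)
qed

definition Inter_selections :: "(nat \<Rightarrow> 'a set set) \<Rightarrow> 'a set set" where
  "Inter_selections \<U> = {\<Inter>n. V n | V. \<forall>n. V n \<in> \<U> n}"

lemma Inter_selections_in_GK: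
  assumes "\<And>n. \<U> n \<in> GK X"
  shows "Inter_selections \<U> \<in> GK X"
  unfolding GK_def
proof (intro CollectI conjI ballI allI impI)
  fix S assume "S \<in> Inter_selections \<U>"
  then obtain V where V: "\<And>n. V n \<in> \<U> n" and S: "S = (\<Inter>n. V n)"
    unfolding Inter_selections_def by blast
  show "gdelta_in X S"
    unfolding S using V assms by (intro gdelta_in_Inter) (fastforce simp: GK_def)+
next
  show "topspace X \<notin> Inter_selections \<U>"
  proof
    assume "topspace X \<in> Inter_selections \<U>"
    then obtain V where V: "\<And>n. V n \<in> \<U> n" and S: "topspace X = (\<Inter>n. V n)"
      unfolding Inter_selections_def by blast
    have "V 0 \<subseteq> topspace X"
      using V[of 0] assms[of 0] gdelta_in_subset by (auto simp: GK_def)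
    with S have "V 0 = topspace X" by auto
    with V[of 0] assms[of 0] show False by (auto simp: GK_def)
  qed
next
  fix K assume "compactin X K"
  then have "\<forall>n. \<exists>U\<in>\<U> n. K \<subseteq> U" using assms by (auto simp: GK_def)
  then obtain V where "\<And>n. V n \<in> \<U> n" "\<And>n. K \<subseteq> V n" by metis
  then show "\<exists>S\<in>Inter_selections \<U>. K \<subseteq> S"
    by (intro bexI[of _ "\<Inter>n. V n"]) (auto simp: Inter_selections_def)
qed

theorem lemma4p5:
  fixes X :: "'a topology"
  assumes "t1_space X"
    and "infinite (topspace X)"
    and "S1 (GK X) (Gcov X)"
    and "\<And>n. \<U> n \<in> GK X"
  shows "\<exists>U. (\<forall>n. U n \<in> \<U> n) \<and>
    (\<forall>x\<in>topspace X. \<forall>\<^sub>F n in sequentially. x \<in> (\<Union>j\<in>{tri n..<tri (Suc n)}. U j))"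
proof -
  define W where "W m = Inter_selections (\<lambda>k. \<U> (tri (m + k) + m))" for m
  have "W m \<in> GK X" for m
    unfolding W_def by (rule Inter_selections_in_GK) (rule assms(4))
  then obtain f where f: "\<And>m. f m \<in> W m" and "range f \<in> Gcov X"
    using assms(3) unfolding S1_def by meson
  then have cover: "\<Union>(range f) = topspace X" by (simp add: Gcov_def)
  have "\<forall>m. \<exists>V. (\<forall>k. V k \<in> \<U> (tri (m + k) + m)) \<and> f m = (\<Inter>k. V k)"
    using f unfolding W_def Inter_selections_def by blast
  then obtain V where V: "\<And>m k. V m k \<in> \<U> (tri (m + k) + m)" and fV: "\<And>m. f m = (\<Inter>k. V m k)"
    by metis
  have V_triangle: "V m (n - m) \<in> \<U> (tri n + m)" if "m \<le> n" for m n
    using V[of m "n - m"] that by simp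
  obtain U where U: "\<And>j. U j \<in> \<U> j" and UV: "\<And>m n. m \<le> n \<Longrightarrow> U (tri n + m) = V m (n - m)"
    using triangular_selection[of "\<lambda>m n. V m (n - m)", OF V_triangle] by blast
  have "\<forall>\<^sub>F n in sequentially. x \<in> (\<Union>j\<in>{tri n..<tri (Suc n)}. U j)" if "x \<in> topspace X" for x
  proof -
    obtain m where "x \<in> f m" using cover \<open>x \<in> topspace X\<close> by blast
    then have "x \<in> U (tri n + m) \<and> tri n + m \<in> {tri n..<tri (Suc n)}" if "m \<le> n" for n
      using that UV fV by (auto simp: tri_Suc)
    then show ?thesis unfolding eventually_sequentially by blast
  qed
  with U show ?thesis by blast
qed

end
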